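(* Let $\langle A, \leq, \otimes, \mathbf{1}\rangle$ be a partially ordered monoid and let $C'(A) = \{c \in A \mid \exists a,b \in A.\ a < b \wedge a \otimes c = b \otimes c\}$. Then $C'(A)$ is an ideal of $A$. If moreover $\otimes$ is monotone (i.e. $a \leq b$ implies $a \otimes c \leq b \otimes c$ for all $a,b,c\in A$), then $I'(A) = A \setminus C'(A)$ is a sub-monoid of $\langle A,\otimes,\mathbf{1}\rangle$ and $C'(A)$ is a prime ideal of $A$.
   Context: A partially ordered monoid $\langle A, \leq, \otimes, \mathbf{1}\rangle$ consists of a partial order $\langle A,\leq\rangle$ and a commutative monoid $\langle A, \otimes, \mathbf{1}\rangle$; $a<b$ means $a\leq b$ and $a\neq b$. A subset $J\subseteq A$ is an ideal if $a\otimes c\in J$ for all $a\in A$, $c\in J$; it is prime if moreover $a\otimes b\in J$ implies $a\in J$ or $b\in J$. A sub-monoid is a subset containing $\mathbf{1}$ and closed under $\otimes$. *)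

theory Defs
  imports Main
begin

text \<open>A partially ordered monoid: the partial order is the type-class order of 'a,
  and (f, e) form a commutative monoid (library locale comm_monoid).
  The carrier A is the whole type.\<close>

definition pomonoid :: "('a::order \<Rightarrow> 'a \<Rightarrow> 'a) \<Rightarrow> 'a \<Rightarrow> bool" where
  "pomonoid f e \<longleftrightarrow> comm_monoid f e"

definition C' :: "('a::order \<Rightarrow> 'a \<Rightarrow> 'a) \<Rightarrow> 'a set" where
  "C' f = {c. \<exists>a b. a < b \<and> f a c = f b c}"

definition I' :: "('a::order \<Rightarrow> 'a \<Rightarrow> 'a) \<Rightarrow> 'a set" where
  "I' f = UNIV - C' f"

definition is_ideal :: "('a \<Rightarrow> 'a \<Rightarrow> 'a) \<Rightarrow> 'a set \<Rightarrow> bool" where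
  "is_ideal f J \<longleftrightarrow> (\<forall>a c. c \<in> J \<longrightarrow> f a c \<in> J)"

definition is_prime_ideal :: "('a \<Rightarrow> 'a \<Rightarrow> 'a) \<Rightarrow> 'a set \<Rightarrow> bool" where
  "is_prime_ideal f J \<longleftrightarrow> is_ideal f J \<and> (\<forall>a b. f a b \<in> J \<longrightarrow> a \<in> J \<or> b \<in> J)"

definition is_submonoid :: "('a \<Rightarrow> 'a \<Rightarrow> 'a) \<Rightarrow> 'a \<Rightarrow> 'a set \<Rightarrow> bool" where
  "is_submonoid f e S \<longleftrightarrow> e \<in> S \<and> (\<forall>a b. a \<in> S \<longrightarrow> b \<in> S \<longrightarrow> f a b \<in> S)"

definition monotone_op :: "('a::order \<Rightarrow> 'a \<Rightarrow> 'a) \<Rightarrow> bool" where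
  "monotone_op f \<longleftrightarrow> (\<forall>a b c. a \<le> b \<longrightarrow> f a c \<le> f b c)"

end

theory Submission
  imports Defs
begin

text \<open>If \<open>a < b\<close> are identified by \<open>c\<close>, they are identified by every multiple of \<open>c\<close>,
  so \<open>C'\<close> is an ideal. Conversely, if \<open>x < y\<close> are identified by \<open>a \<otimes> b\<close>, monotonicity
  gives \<open>x \<otimes> a \<le> y \<otimes> a\<close>: either equality holds and \<open>a \<in> C'\<close>, or the inequality is
  strict and \<open>b\<close> identifies \<open>x \<otimes> a < y \<otimes> a\<close>, so \<open>b \<in> C'\<close>. Hence \<open>C'\<close> is prime, and its
  complement is closed under \<open>\<otimes>\<close>; it contains \<open>\<one>\<close> since \<open>\<one>\<close> identifies nothing.\<close>

lemma C'_is_ideal: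
  assumes "abel_semigroup f"
  shows "is_ideal f (C' f)"
  unfolding is_ideal_def C'_def
proof (intro allI impI, clarsimp)
  interpret abel_semigroup f by fact
  fix d c a b assume "a < b" "f a c = f b c"
  then have "f a (f d c) = f b (f d c)"
    by (metis assoc commute)
  with \<open>a < b\<close> show "\<exists>a b. a < b \<and> f a (f d c) = f b (f d c)" by blast
qed

lemma unit_not_in_C':
  assumes "monoid f e"
  shows "e \<notin> C' f"
  using monoid.right_neutral [OF assms] unfolding C'_def by auto

lemma C'_mult_cases:
  assumes "semigroup f" and "monotone_op f" and "f a b \<in> C' f"
  shows "a \<in> C' f \<or> b \<in> C' f"
proof -
  obtain x y where "x < y" and "f x (f a b) = f y (f a b)"
    using assms(3) unfolding C'_def by blast
  then have identified: "f (f x a) b = f (f y a) b"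
    by (simp add: semigroup.assoc [OF assms(1)])
  have "f x a \<le> f y a"
    using assms(2) \<open>x < y\<close> unfolding monotone_op_def by simp
  then consider "f x a = f y a" | "f x a < f y a"
    by fastforce
  then show ?thesis
  proof cases
    case 1
    with \<open>x < y\<close> show ?thesis unfolding C'_def by blast
  next
    case 2
    with identified show ?thesis unfolding C'_def by blast
  qed
qed

lemma C'_is_prime_ideal:
  assumes "abel_semigroup f" and "monotone_op f"
  shows "is_prime_ideal f (C' f)"
  using C'_is_ideal [OF assms(1)] C'_mult_cases [OF _ assms(2)] assms(1)
  unfolding is_prime_ideal_def abel_semigroup_def by blast

lemma I'_is_submonoid:
  assumes "monoid f e" and "monotone_op f"
  shows "is_submonoid f e (I' f)"
  using unit_not_in_C' [OF assms(1)] C'_mult_cases [OF _ assms(2)] assms(1)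
  unfolding is_submonoid_def I'_def monoid_def by blast

theorem lemma6:
  fixes f :: "'a::order \<Rightarrow> 'a \<Rightarrow> 'a" and e :: 'a
  assumes "pomonoid f e"
  shows "is_ideal f (C' f) \<and>
    (monotone_op f \<longrightarrow> is_submonoid f e (I' f) \<and> is_prime_ideal f (C' f))"
proof -
  interpret comm_monoid f e
    using assms unfolding pomonoid_def .
  have "abel_semigroup f" and "monoid f e"
    by unfold_locales
  then show ?thesis
    using C'_is_ideal I'_is_submonoid C'_is_prime_ideal by blast
qed

end
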